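(* Let $G=G_1\cup G_2$, where $G_1\cap G_2$ is a clique. If both $G_1$ and $G_2$ have clique-based $\infty$-admissibility at most $t$, then $G$ has clique-based $\infty$-admissibility at most $t$ as well.
   Context: All graphs are finite and simple. Given an ordering $v_1,\ldots,v_n$ of $V(G)$, the $\infty$-backconnectivity of $v_k$ is the maximum number of paths (of any length) from $v_k$ to $\{v_1,\ldots,v_{k-1}\}$ that pairwise intersect only in $v_k$; the $\infty$-admissibility of the ordering is the maximum $\infty$-backconnectivity over its vertices. For $X\subseteq V(G)$, $G$ has $X$-based $\infty$-admissibility at most $t$ if there is an ordering $v_1,\ldots,v_n$ of $V(G)$ with $\infty$-admissibility at most $t$ and $X=\{v_1,\ldots,v_{|X|}\}$. $G$ has clique-based $\infty$-admissibility at most $t$ if it has $X$-based $\infty$-admissibility at most $t$ for every $X\subseteq V(G)$ inducing a clique in $G$. *)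

theory Defs
  imports Main
begin

definition simple_graph :: "'a set \<Rightarrow> ('a \<times> 'a) set \<Rightarrow> bool" where
  "simple_graph V E \<longleftrightarrow> finite V \<and> E \<subseteq> V \<times> V \<and> sym E \<and> irrefl E"

definition path_to_set :: "'a set \<Rightarrow> ('a \<times> 'a) set \<Rightarrow> 'a \<Rightarrow> 'a set \<Rightarrow> 'a list \<Rightarrow> bool" where
  "path_to_set V E v S p \<longleftrightarrow>
     p \<noteq> [] \<and> hd p = v \<and> distinct p \<and> set p \<subseteq> V \<and>
     (\<forall>i < length p - 1. (p ! i, p ! Suc i) \<in> E) \<and>
     last p \<in> S \<and> (\<forall>x \<in> set (butlast p). x \<notin> S)"

definition internally_disjoint_family ::
  "'a set \<Rightarrow> ('a \<times> 'a) set \<Rightarrow> 'a \<Rightarrow> 'a set \<Rightarrow> 'a list set \<Rightarrow> bool" where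
  "internally_disjoint_family V E v S P \<longleftrightarrow>
     (\<forall>p \<in> P. path_to_set V E v S p) \<and>
     (\<forall>p \<in> P. \<forall>q \<in> P. p \<noteq> q \<longrightarrow> set p \<inter> set q = {v})"

text \<open>The \<infinity>-backconnectivity of the k-th vertex (0-indexed) of the ordering xs.\<close>

definition backconn :: "'a set \<Rightarrow> ('a \<times> 'a) set \<Rightarrow> 'a list \<Rightarrow> nat \<Rightarrow> nat" where
  "backconn V E xs k =
     Max {card P | P. internally_disjoint_family V E (xs ! k) (set (take k xs)) P}"

definition is_ordering :: "'a set \<Rightarrow> 'a list \<Rightarrow> bool" where
  "is_ordering V xs \<longleftrightarrow> distinct xs \<and> set xs = V"

definition inf_adm_le :: "'a set \<Rightarrow> ('a \<times> 'a) set \<Rightarrow> 'a list \<Rightarrow> nat \<Rightarrow> bool" where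
  "inf_adm_le V E xs t \<longleftrightarrow> (\<forall>k < length xs. backconn V E xs k \<le> t)"

definition based_inf_adm_le :: "'a set \<Rightarrow> ('a \<times> 'a) set \<Rightarrow> 'a set \<Rightarrow> nat \<Rightarrow> bool" where
  "based_inf_adm_le V E X t \<longleftrightarrow>
     (\<exists>xs. is_ordering V xs \<and> inf_adm_le V E xs t \<and> X = set (take (card X) xs))"

definition is_clique :: "('a \<times> 'a) set \<Rightarrow> 'a set \<Rightarrow> bool" where
  "is_clique E X \<longleftrightarrow> (\<forall>u \<in> X. \<forall>w \<in> X. u \<noteq> w \<longrightarrow> (u, w) \<in> E)"

definition clique_based_inf_adm_le :: "'a set \<Rightarrow> ('a \<times> 'a) set \<Rightarrow> nat \<Rightarrow> bool" where
  "clique_based_inf_adm_le V E t \<longleftrightarrow>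
     (\<forall>X. X \<subseteq> V \<longrightarrow> is_clique E X \<longrightarrow> based_inf_adm_le V E X t)"

end

theory Submission imports Defs begin

text \<open>Order G1 first by an ordering witnessing its X-based bound, then the vertices of
  V2 - V1 in the order they take in an ordering of G2 that starts with the clique V1 \<inter> V2.
  A vertex of G1 loses no backconnectivity: deleting from a path to earlier vertices all
  vertices outside V1 yields a path of G1, since every detour through G2 - V1 starts and
  ends in the clique V1 \<inter> V2 and can be replaced by a single edge. A vertex of V2 - V1
  sees all of V1 before it, so the paths counted for it cannot pass through V1 and
  are paths of G2 to vertices that precede it in the ordering of G2. Cliques of G1 \<union> G2
  lie inside G1 or G2, which gives the theorem.\<close>

lemma nth_notin_set_take:
  assumes "distinct xs" "k < length xs"
  shows "xs ! k \<notin> set (take k xs)"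
proof -
  have "xs ! k \<in> set (drop k xs)"
    using assms(2) by (metis Cons_nth_drop_Suc list.set_intros(1))
  thus ?thesis
    using set_take_disj_set_drop_if_distinct[OF assms(1) order_refl] by blast
qed

lemma set_drop_eq_diff_set_take:
  assumes "distinct xs"
  shows "set (drop n xs) = set xs - set (take n xs)"
proof -
  have "set xs = set (take n xs) \<union> set (drop n xs)"
    by (metis append_take_drop_id set_append)
  thus ?thesis using set_take_disj_set_drop_if_distinct[OF assms order_refl, of n] by blast
qed

lemma successively_iff_nth_Suc:
  "successively R xs \<longleftrightarrow> (\<forall>i < length xs - 1. R (xs ! i) (xs ! Suc i))"
  unfolding successively_conv_nth by (metis Suc_eq_plus1 less_diff_conv)

lemma path_to_set_iff_successively:
  "path_to_set V E v S p \<longleftrightarrow>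
     p \<noteq> [] \<and> hd p = v \<and> distinct p \<and> set p \<subseteq> V \<and> successively (\<lambda>x y. (x, y) \<in> E) p \<and>
     last p \<in> S \<and> (\<forall>x \<in> set (butlast p). x \<notin> S)"
  unfolding path_to_set_def successively_iff_nth_Suc ..

lemma successively_edges_set_subset:
  assumes "E \<subseteq> V \<times> V" "successively (\<lambda>x y. (x, y) \<in> E) p" "hd p \<in> V"
  shows "set p \<subseteq> V"
  using assms(2,3) by (induction p rule: induct_list012) (use assms(1) in auto)

definition max_disjoint_paths :: "'a set \<Rightarrow> ('a \<times> 'a) set \<Rightarrow> 'a \<Rightarrow> 'a set \<Rightarrow> nat" where
  "max_disjoint_paths V E v S = Max {card P | P. internally_disjoint_family V E v S P}"

lemma backconn_eq_max_disjoint_paths: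
  "backconn V E xs k = max_disjoint_paths V E (xs ! k) (set (take k xs))"
  unfolding backconn_def max_disjoint_paths_def ..

lemma finite_cards_disjoint_families:
  assumes "finite V"
  shows "finite {card P | P. internally_disjoint_family V E v S P}"
proof -
  have "{card P | P. internally_disjoint_family V E v S P} \<subseteq> card ` Pow {p. set p \<subseteq> V \<and> distinct p}"
  proof
    fix n assume "n \<in> {card P | P. internally_disjoint_family V E v S P}"
    then obtain P where "n = card P" "internally_disjoint_family V E v S P" by blast
    moreover from this have "P \<subseteq> {p. set p \<subseteq> V \<and> distinct p}"
      unfolding internally_disjoint_family_def path_to_set_def by blast
    ultimately show "n \<in> card ` Pow {p. set p \<subseteq> V \<and> distinct p}" by blast
  qed
  moreover have "finite (card ` Pow {p. set p \<subseteq> V \<and> distinct p})"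
    using finite_subset_distinct[OF assms] by simp
  ultimately show ?thesis by (rule finite_subset)
qed

lemma card_le_max_disjoint_paths:
  assumes "finite V" "internally_disjoint_family V E v S P"
  shows "card P \<le> max_disjoint_paths V E v S"
  unfolding max_disjoint_paths_def
  using assms by (blast intro: Max_ge finite_cards_disjoint_families)

text \<open>The chosen subpaths stay pairwise disjoint outside v, and they are distinct because
  each of them leaves v (its endpoint lies in S', which avoids v).\<close>

lemma max_disjoint_paths_mono:
  assumes "finite V" "finite V'" "v \<notin> S'"
    and sub: "\<And>p. path_to_set V E v S p \<Longrightarrow> \<exists>p'. path_to_set V' E' v S' p' \<and> set p' \<subseteq> set p"
  shows "max_disjoint_paths V E v S \<le> max_disjoint_paths V' E' v S'"
  unfolding max_disjoint_paths_def
proof (rule Max.boundedI)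
  have "internally_disjoint_family V E v S {}"
    unfolding internally_disjoint_family_def by simp
  thus "{card P | P. internally_disjoint_family V E v S P} \<noteq> {}" by blast
  show "finite {card P | P. internally_disjoint_family V E v S P}"
    using finite_cards_disjoint_families[OF assms(1)] .
  fix n assume "n \<in> {card P | P. internally_disjoint_family V E v S P}"
  then obtain P where n: "n = card P" and P: "internally_disjoint_family V E v S P" by blast
  obtain f where f: "\<And>p. p \<in> P \<Longrightarrow> path_to_set V' E' v S' (f p) \<and> set (f p) \<subseteq> set p"
    using sub P unfolding internally_disjoint_family_def by metis
  have f_ends: "v \<in> set (f p)" "last (f p) \<in> set (f p) - {v}" if "p \<in> P" for p
    using f[OF that] assms(3) unfolding path_to_set_def by auto
  have disj: "set (f p) \<inter> set (f q) = {v}" if "p \<in> P" "q \<in> P" "p \<noteq> q" for p q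
  proof -
    have "set p \<inter> set q = {v}"
      using P that unfolding internally_disjoint_family_def by blast
    thus ?thesis using f that f_ends by blast
  qed
  have "inj_on f P"
    by (rule inj_onI) (metis disj f_ends(2) Diff_iff Int_absorb singletonD)
  hence "n = card (f ` P)" using n by (simp add: card_image)
  moreover have "internally_disjoint_family V' E' v S' (f ` P)"
    unfolding internally_disjoint_family_def using f disj by blast
  ultimately show "n \<le> Max {card P | P. internally_disjoint_family V' E' v S' P}"
    using card_le_max_disjoint_paths[OF assms(2)] unfolding max_disjoint_paths_def by presburger
qed

subsection \<open>Paths in a union of two graphs glued along a clique\<close>

text \<open>The second conjunct is the invariant that makes the induction go through: a detour
  outside V1 runs in the second graph, so it leaves and re-enters V1 inside the clique.\<close>

lemma successively_filter_through_clique: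
  assumes E1: "E1 \<subseteq> V1 \<times> V1" and E2: "E2 \<subseteq> V2 \<times> V2" and cl: "is_clique E1 (V1 \<inter> V2)"
    and "successively (\<lambda>x y. (x, y) \<in> E1 \<union> E2) p" "distinct p" "p \<noteq> []" "last p \<in> V1"
  shows "successively (\<lambda>x y. (x, y) \<in> E1) (filter (\<lambda>x. x \<in> V1) p) \<and>
    (hd p \<notin> V1 \<longrightarrow> hd (filter (\<lambda>x. x \<in> V1) p) \<in> V2)"
  using assms(4-)
proof (induction p rule: induct_list012)
  case (3 a b rest)
  let ?F = "filter (\<lambda>x. x \<in> V1) (b # rest)"
  have IH: "successively (\<lambda>x y. (x, y) \<in> E1) ?F \<and> (b \<notin> V1 \<longrightarrow> hd ?F \<in> V2)"
    using "3.IH"(2) "3.prems" by simp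
  have "last (b # rest) \<in> V1" using "3.prems"(4) by simp
  hence "?F \<noteq> []" by (metis filter_empty_conv last_in_set list.distinct(1))
  then obtain h fr where F: "?F = h # fr" by (cases ?F) auto
  have "h \<in> set ?F" using F by simp
  hence h: "h \<in> V1" "h \<in> set (b # rest)" unfolding set_filter by blast+
  have "a \<noteq> h" using "3.prems"(2) h(2) by auto
  have ab: "(a, b) \<in> E1 \<union> E2" using "3.prems"(1) by simp
  have h_if_b: "b \<in> V1 \<Longrightarrow> h = b" using F by simp
  have h_if_not_b: "b \<notin> V1 \<Longrightarrow> h \<in> V2 \<and> (a, b) \<in> E2" using IH F ab E1 by auto
  have "(a, h) \<in> E1" if "a \<in> V1"
  proof (cases "(a, h) \<in> E1")
    case False
    hence "a \<in> V2 \<and> h \<in> V2" using h_if_b h_if_not_b ab E2 by (cases "b \<in> V1") auto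
    thus ?thesis using cl \<open>a \<noteq> h\<close> h(1) that unfolding is_clique_def by blast
  qed
  moreover have "h \<in> V2" if "a \<notin> V1"
    using h_if_b h_if_not_b ab E1 E2 that by (cases "b \<in> V1") auto
  ultimately show ?case using IH F by auto
qed auto

lemma walk_avoiding_side_in_other_side:
  assumes E1: "E1 \<subseteq> V1 \<times> V1" and E2: "E2 \<subseteq> V2 \<times> V2"
    and walk: "successively (\<lambda>x y. (x, y) \<in> E1 \<union> E2) p"
    and avoid: "\<forall>x \<in> set (butlast p). x \<notin> V1" and "hd p \<in> V2"
  shows "successively (\<lambda>x y. (x, y) \<in> E2) p" "set p \<subseteq> V2"
proof -
  show E2_walk: "successively (\<lambda>x y. (x, y) \<in> E2) p"
    using walk avoid by (induction p rule: induct_list012) (use E1 in auto)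
  show "set p \<subseteq> V2"
    using successively_edges_set_subset[OF E2 E2_walk \<open>hd p \<in> V2\<close>] .
qed

lemma max_disjoint_paths_union_le_left:
  assumes g1: "simple_graph V1 E1" and g2: "simple_graph V2 E2" and cl: "is_clique E1 (V1 \<inter> V2)"
    and "v \<in> V1" "S \<subseteq> V1" "v \<notin> S"
  shows "max_disjoint_paths (V1 \<union> V2) (E1 \<union> E2) v S \<le> max_disjoint_paths V1 E1 v S"
proof (rule max_disjoint_paths_mono)
  show "finite (V1 \<union> V2)" "finite V1" using g1 g2 unfolding simple_graph_def by auto
  show "v \<notin> S" by fact
  have E1: "E1 \<subseteq> V1 \<times> V1" and E2: "E2 \<subseteq> V2 \<times> V2"
    using g1 g2 unfolding simple_graph_def by auto
  fix p assume "path_to_set (V1 \<union> V2) (E1 \<union> E2) v S p"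
  hence p: "p \<noteq> []" "hd p = v" "distinct p" "successively (\<lambda>x y. (x, y) \<in> E1 \<union> E2) p"
    "last p \<in> S" "\<forall>x \<in> set (butlast p). x \<notin> S"
    unfolding path_to_set_iff_successively by auto
  define p' where "p' = filter (\<lambda>x. x \<in> V1) p"
  have last: "last p \<in> V1" using p(5) \<open>S \<subseteq> V1\<close> by blast
  have p'_snoc: "p' = filter (\<lambda>x. x \<in> V1) (butlast p) @ [last p]"
    unfolding p'_def using last append_butlast_last_id[OF p(1)]
    by (metis filter.simps filter_append append_Nil)
  have "hd p' = v"
    using p(1,2) \<open>v \<in> V1\<close> unfolding p'_def by (cases p) auto
  moreover have "successively (\<lambda>x y. (x, y) \<in> E1) p'"
    using successively_filter_through_clique[OF E1 E2 cl p(4,3,1) last] unfolding p'_def by blast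
  moreover have "distinct p'" "set p' \<subseteq> V1" unfolding p'_def using p(3) by auto
  moreover have "p' \<noteq> []" "last p' \<in> S" using p'_snoc p(5) by simp_all
  moreover have "\<forall>x \<in> set (butlast p'). x \<notin> S"
    using p(6) p'_snoc by auto
  ultimately have "path_to_set V1 E1 v S p'"
    unfolding path_to_set_iff_successively by blast
  moreover have "set p' \<subseteq> set p" unfolding p'_def by auto
  ultimately show "\<exists>p'. path_to_set V1 E1 v S p' \<and> set p' \<subseteq> set p" by blast
qed

lemma max_disjoint_paths_union_le_right:
  assumes g1: "simple_graph V1 E1" and g2: "simple_graph V2 E2"
    and "v \<in> V2" "V1 \<subseteq> S" "v \<notin> S"
  shows "max_disjoint_paths (V1 \<union> V2) (E1 \<union> E2) v S \<le> max_disjoint_paths V2 E2 v (S \<inter> V2)"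
proof (rule max_disjoint_paths_mono)
  show "finite (V1 \<union> V2)" "finite V2" using g1 g2 unfolding simple_graph_def by auto
  show "v \<notin> S \<inter> V2" using \<open>v \<notin> S\<close> by blast
  have E1: "E1 \<subseteq> V1 \<times> V1" and E2: "E2 \<subseteq> V2 \<times> V2"
    using g1 g2 unfolding simple_graph_def by auto
  fix p assume "path_to_set (V1 \<union> V2) (E1 \<union> E2) v S p"
  hence p: "p \<noteq> []" "hd p = v" "distinct p" "successively (\<lambda>x y. (x, y) \<in> E1 \<union> E2) p"
    "last p \<in> S" "\<forall>x \<in> set (butlast p). x \<notin> S"
    unfolding path_to_set_iff_successively by auto
  have avoid: "\<forall>x \<in> set (butlast p). x \<notin> V1" using p(6) \<open>V1 \<subseteq> S\<close> by blast
  note in_G2 = walk_avoiding_side_in_other_side[OF E1 E2 p(4) avoid]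
  have "path_to_set V2 E2 v (S \<inter> V2) p"
    unfolding path_to_set_iff_successively
    using p in_G2 \<open>v \<in> V2\<close> last_in_set by fastforce
  thus "\<exists>p'. path_to_set V2 E2 v (S \<inter> V2) p' \<and> set p' \<subseteq> set p" by blast
qed

lemma backconn_append_le_left:
  assumes g1: "simple_graph V1 E1" and g2: "simple_graph V2 E2" and cl: "is_clique E1 (V1 \<inter> V2)"
    and o1: "is_ordering V1 \<sigma>1" and k: "k < length \<sigma>1"
  shows "backconn (V1 \<union> V2) (E1 \<union> E2) (\<sigma>1 @ ys) k \<le> backconn V1 E1 \<sigma>1 k"
proof -
  have d1: "distinct \<sigma>1" and s1: "set \<sigma>1 = V1" using o1 unfolding is_ordering_def by auto
  have v: "\<sigma>1 ! k \<in> V1" using k s1 nth_mem by blast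
  have S: "set (take k \<sigma>1) \<subseteq> V1" using s1 set_take_subset by metis
  have "backconn (V1 \<union> V2) (E1 \<union> E2) (\<sigma>1 @ ys) k
      = max_disjoint_paths (V1 \<union> V2) (E1 \<union> E2) (\<sigma>1 ! k) (set (take k \<sigma>1))"
    unfolding backconn_eq_max_disjoint_paths using k by (simp add: nth_append)
  also have "\<dots> \<le> backconn V1 E1 \<sigma>1 k"
    unfolding backconn_eq_max_disjoint_paths
    using max_disjoint_paths_union_le_left[OF g1 g2 cl v S nth_notin_set_take[OF d1 k]] .
  finally show ?thesis .
qed

lemma backconn_append_drop_le_right:
  assumes g1: "simple_graph V1 E1" and g2: "simple_graph V2 E2"
    and o1: "is_ordering V1 \<sigma>1" and o2: "is_ordering V2 \<sigma>2"
    and C: "set (take c \<sigma>2) = V1 \<inter> V2" and j: "j < length (drop c \<sigma>2)"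
  shows "backconn (V1 \<union> V2) (E1 \<union> E2) (\<sigma>1 @ drop c \<sigma>2) (length \<sigma>1 + j)
    \<le> backconn V2 E2 \<sigma>2 (c + j)"
proof -
  define ys where "ys = drop c \<sigma>2"
  have s1: "set \<sigma>1 = V1" and d2: "distinct \<sigma>2" and s2: "set \<sigma>2 = V2"
    using o1 o2 unfolding is_ordering_def by auto
  have ys: "set ys = V2 - V1" "distinct ys"
    using set_drop_eq_diff_set_take[OF d2, of c] C s2 d2 unfolding ys_def by auto
  have j: "j < length ys" using j unfolding ys_def .
  have v: "ys ! j \<in> V2" "ys ! j \<notin> V1 \<union> set (take j ys)"
    using nth_mem[OF j] ys nth_notin_set_take[OF ys(2) j] by auto
  have "set (take (c + j) \<sigma>2) = (V1 \<inter> V2) \<union> set (take j ys)"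
    using C unfolding ys_def by (simp add: take_add)
  hence S: "(V1 \<union> set (take j ys)) \<inter> V2 = set (take (c + j) \<sigma>2)"
    using set_take_subset[of j ys] ys(1) by blast
  have "backconn (V1 \<union> V2) (E1 \<union> E2) (\<sigma>1 @ ys) (length \<sigma>1 + j)
      = max_disjoint_paths (V1 \<union> V2) (E1 \<union> E2) (ys ! j) (V1 \<union> set (take j ys))"
    unfolding backconn_eq_max_disjoint_paths using s1 by (simp add: nth_append)
  also have "\<dots> \<le> max_disjoint_paths V2 E2 (ys ! j) ((V1 \<union> set (take j ys)) \<inter> V2)"
    by (rule max_disjoint_paths_union_le_right[OF g1 g2 v(1) _ v(2)]) blast
  also have "\<dots> = backconn V2 E2 \<sigma>2 (c + j)"
    unfolding backconn_eq_max_disjoint_paths S using j unfolding ys_def by simp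
  finally show ?thesis unfolding ys_def .
qed

lemma inf_adm_le_append_drop:
  assumes g1: "simple_graph V1 E1" and g2: "simple_graph V2 E2" and cl: "is_clique E1 (V1 \<inter> V2)"
    and o1: "is_ordering V1 \<sigma>1" and a1: "inf_adm_le V1 E1 \<sigma>1 t"
    and o2: "is_ordering V2 \<sigma>2" and a2: "inf_adm_le V2 E2 \<sigma>2 t"
    and C: "set (take c \<sigma>2) = V1 \<inter> V2"
  shows "inf_adm_le (V1 \<union> V2) (E1 \<union> E2) (\<sigma>1 @ drop c \<sigma>2) t"
  unfolding inf_adm_le_def
proof (intro allI impI)
  fix k assume k: "k < length (\<sigma>1 @ drop c \<sigma>2)"
  show "backconn (V1 \<union> V2) (E1 \<union> E2) (\<sigma>1 @ drop c \<sigma>2) k \<le> t"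
  proof (cases "k < length \<sigma>1")
    case True
    thus ?thesis using backconn_append_le_left[OF g1 g2 cl o1 True] a1
      unfolding inf_adm_le_def by (meson order_trans)
  next
    case False
    then obtain j where kj: "k = length \<sigma>1 + j" and j: "j < length (drop c \<sigma>2)"
      using k by (metis add_diff_inverse_nat length_append nat_add_left_cancel_less)
    hence "c + j < length \<sigma>2" by simp
    thus ?thesis using backconn_append_drop_le_right[OF g1 g2 o1 o2 C j] a2
      unfolding inf_adm_le_def kj by (meson order_trans)
  qed
qed

lemma based_inf_adm_le_union:
  assumes g1: "simple_graph V1 E1" and g2: "simple_graph V2 E2" and cl: "is_clique E1 (V1 \<inter> V2)"
    and X: "based_inf_adm_le V1 E1 X t" "X \<subseteq> V1"
    and C: "based_inf_adm_le V2 E2 (V1 \<inter> V2) t"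
  shows "based_inf_adm_le (V1 \<union> V2) (E1 \<union> E2) X t"
proof -
  obtain \<sigma>1 where o1: "is_ordering V1 \<sigma>1" and a1: "inf_adm_le V1 E1 \<sigma>1 t"
    and X1: "X = set (take (card X) \<sigma>1)" using X(1) unfolding based_inf_adm_le_def by blast
  obtain \<sigma>2 where o2: "is_ordering V2 \<sigma>2" and a2: "inf_adm_le V2 E2 \<sigma>2 t"
    and C2: "set (take (card (V1 \<inter> V2)) \<sigma>2) = V1 \<inter> V2"
    using C unfolding based_inf_adm_le_def by metis
  let ?xs = "\<sigma>1 @ drop (card (V1 \<inter> V2)) \<sigma>2"
  have d1: "distinct \<sigma>1" and s1: "set \<sigma>1 = V1" and d2: "distinct \<sigma>2" and s2: "set \<sigma>2 = V2"
    using o1 o2 unfolding is_ordering_def by auto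
  have "set (drop (card (V1 \<inter> V2)) \<sigma>2) = V2 - V1"
    using set_drop_eq_diff_set_take[OF d2] C2 s2 by blast
  hence "is_ordering (V1 \<union> V2) ?xs"
    using d1 s1 d2 unfolding is_ordering_def by auto
  moreover have "inf_adm_le (V1 \<union> V2) (E1 \<union> E2) ?xs t"
    using inf_adm_le_append_drop[OF g1 g2 cl o1 a1 o2 a2 C2] .
  moreover have "card X \<le> length \<sigma>1"
    using card_mono[of V1 X] g1 X(2) distinct_card[OF d1] s1 unfolding simple_graph_def by simp
  hence "X = set (take (card X) ?xs)" using X1 by simp
  ultimately show ?thesis unfolding based_inf_adm_le_def by blast
qed

lemma clique_of_union_within_side:
  assumes "E1 \<subseteq> V1 \<times> V1" "E2 \<subseteq> V2 \<times> V2" "X \<subseteq> V1 \<union> V2" "is_clique (E1 \<union> E2) X"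
  shows "X \<subseteq> V1 \<or> X \<subseteq> V2"
proof (rule ccontr)
  assume "\<not> (X \<subseteq> V1 \<or> X \<subseteq> V2)"
  then obtain x y where "x \<in> X" "x \<notin> V1" "y \<in> X" "y \<notin> V2" by blast
  moreover from this have "x \<noteq> y" using assms(3) by blast
  ultimately have "(x, y) \<in> E1 \<union> E2" "x \<notin> V1" "y \<notin> V2"
    using assms(4) unfolding is_clique_def by blast+
  thus False using assms(1,2) by blast
qed

lemma clique_of_union_restrict:
  assumes "E2 \<subseteq> V2 \<times> V2" "is_clique E1 (V1 \<inter> V2)" "X \<subseteq> V1" "is_clique (E1 \<union> E2) X"
  shows "is_clique E1 X"
  unfolding is_clique_def
proof (intro ballI impI)
  fix u w assume uw: "u \<in> X" "w \<in> X" "u \<noteq> w"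
  hence "(u, w) \<in> E1 \<or> (u, w) \<in> E2" using assms(4) unfolding is_clique_def by blast
  thus "(u, w) \<in> E1"
  proof
    assume "(u, w) \<in> E2"
    hence "u \<in> V1 \<inter> V2" "w \<in> V1 \<inter> V2" using assms(1,3) uw by auto
    thus ?thesis using assms(2) uw(3) unfolding is_clique_def by blast
  qed
qed
lemma based_inf_adm_le_union_of_clique:
  assumes g1: "simple_graph V1 E1" and g2: "simple_graph V2 E2" and cl: "is_clique E1 (V1 \<inter> V2)"
    and G1: "clique_based_inf_adm_le V1 E1 t" and C: "based_inf_adm_le V2 E2 (V1 \<inter> V2) t"
    and X: "X \<subseteq> V1" "is_clique (E1 \<union> E2) X"
  shows "based_inf_adm_le (V1 \<union> V2) (E1 \<union> E2) X t"
proof -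
  have "E2 \<subseteq> V2 \<times> V2" using g2 unfolding simple_graph_def by auto
  hence "based_inf_adm_le V1 E1 X t"
    using clique_of_union_restrict[OF _ cl X(1,2)] G1 X(1) unfolding clique_based_inf_adm_le_def by blast
  thus ?thesis using based_inf_adm_le_union[OF g1 g2 cl _ X(1) C] by blast
qed

theorem lemma25:
  fixes V1 V2 :: "'a set" and E1 E2 :: "('a \<times> 'a) set" and t :: nat
  assumes "simple_graph V1 E1" and "simple_graph V2 E2"
    and "is_clique (E1 \<inter> E2) (V1 \<inter> V2)"
    and "clique_based_inf_adm_le V1 E1 t" and "clique_based_inf_adm_le V2 E2 t"
  shows "clique_based_inf_adm_le (V1 \<union> V2) (E1 \<union> E2) t"
  unfolding clique_based_inf_adm_le_def
proof (intro allI impI)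
  fix X assume X: "X \<subseteq> V1 \<union> V2" "is_clique (E1 \<union> E2) X"
  have E1: "E1 \<subseteq> V1 \<times> V1" and E2: "E2 \<subseteq> V2 \<times> V2"
    using assms(1,2) unfolding simple_graph_def by auto
  have cl1: "is_clique E1 (V1 \<inter> V2)" and cl2: "is_clique E2 (V2 \<inter> V1)"
    using assms(3) unfolding is_clique_def by blast+
  have C1: "based_inf_adm_le V1 E1 (V2 \<inter> V1) t" and C2: "based_inf_adm_le V2 E2 (V1 \<inter> V2) t"
    using assms(4,5) cl1 cl2 unfolding clique_based_inf_adm_le_def by (metis Int_commute inf_le1)+
  from clique_of_union_within_side[OF E1 E2 X] show "based_inf_adm_le (V1 \<union> V2) (E1 \<union> E2) X t"
  proof
    assume "X \<subseteq> V1"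
    thus ?thesis using based_inf_adm_le_union_of_clique[OF assms(1,2) cl1 assms(4) C2] X(2) by blast
  next
    assume "X \<subseteq> V2"
    moreover have "is_clique (E2 \<union> E1) X" using X(2) by (simp add: Un_commute)
    ultimately show ?thesis
      using based_inf_adm_le_union_of_clique[OF assms(2,1) cl2 assms(5) C1] by (simp add: Un_commute)
  qed
qed

end
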